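(* Let $0<s<1$, and let $0<a<1/3$ be such that $a<1/2^{1+s}$. Let $C_a\subset I=[0,1]$ be the fat Cantor set described below. Then \[\|\chi_{C_a}\|_{B^s_{1,1}(I)}\simeq\sum_{j=1}^\infty(2a^{1-s})^j,\] that is, there is a constant $C\ge1$ depending only on $s$ and $a$ such that $C^{-1}\sum_{j\ge1}(2a^{1-s})^j\le\|\chi_{C_a}\|_{B^s_{1,1}(I)}\le C\sum_{j\ge1}(2a^{1-s})^j$ (in particular one side is finite if and only if the other is).
   Context: $I=[0,1]$ carries the Euclidean distance and Lebesgue measure $\mathcal{H}^1$. Construction of $C_a$: remove the open interval $I_{1,1}$ of length $a$ centered at the center of $I$, leaving two closed intervals $C_{1,1},C_{1,2}$. Inductively, at stage $j$, remove from the center of each of the $2^{j-1}$ closed intervals $C_{j-1,k}$ an open interval $I_{j,k}$ of length $a^j$, leaving $2^j$ closed intervals $C_{j,k}$. Set $C_a=I\setminus\bigcup_{j\ge1}\bigcup_{k=1}^{2^{j-1}}I_{j,k}$. The Besov energy on $I$ is $\|u\|_{B^s_{1,1}(I)}=\int_I\int_I\frac{|u(y)-u(x)|}{|x-y|^s\,\mathcal{H}^1(B(x,|x-y|))}\,dy\,dx$, where $B(x,r)=\{y\in I:|x-y|<r\}$. *)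

theory Defs
  imports "HOL-Analysis.Analysis"
begin

text \<open>Closed intervals C_{j,k} of stage j, represented by their endpoint pairs (l,r).\<close>
fun cantor_stage :: "real \<Rightarrow> nat \<Rightarrow> (real \<times> real) set" where
  "cantor_stage a 0 = {(0, 1)}"
| "cantor_stage a (Suc j) =
     (\<Union>(l, r)\<in>cantor_stage a j.
        {(l, (l + r) / 2 - a ^ Suc j / 2), ((l + r) / 2 + a ^ Suc j / 2, r)})"

definition removed_intervals :: "real \<Rightarrow> nat \<Rightarrow> real set set" where
  "removed_intervals a j =
     (\<lambda>(l, r). {(l + r) / 2 - a ^ j / 2 <..< (l + r) / 2 + a ^ j / 2}) ` cantor_stage a (j - 1)"

definition fat_cantor :: "real \<Rightarrow> real set" where
  "fat_cantor a = {0..1} - (\<Union>j\<in>{1..}. \<Union>(removed_intervals a j))"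

text \<open>H^1(B(x,r)) with B(x,r) = {y \<in> I. |x - y| < r}.\<close>
definition ball_I_meas :: "real \<Rightarrow> real \<Rightarrow> real" where
  "ball_I_meas x r = measure lborel {y \<in> {0..1}. \<bar>x - y\<bar> < r}"

definition besov_energy :: "real \<Rightarrow> (real \<Rightarrow> real) \<Rightarrow> ennreal" where
  "besov_energy s u =
     (\<integral>\<^sup>+ x. (\<integral>\<^sup>+ y. ennreal (\<bar>u y - u x\<bar> /
          (\<bar>x - y\<bar> powr s * ball_I_meas x \<bar>x - y\<bar>)) * indicator {0..1} y \<partial>lborel)
        * indicator {0..1} x \<partial>lborel)"

end

theory Submission
  imports Defs
begin

text \<open>For \<open>x, y \<in> I\<close> the measure of \<open>B(x, \<bar>x - y\<bar>)\<close> lies between \<open>\<bar>x - y\<bar>\<close>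
  and \<open>2 \<bar>x - y\<bar>\<close>, so the energy of \<open>\<chi>\<^sub>C\<close> is comparable to the double integral of
  \<open>\<bar>\<chi>\<^sub>C y - \<chi>\<^sub>C x\<bar> \<bar>x - y\<bar> powr -(1+s)\<close>, which by symmetry is twice the
  interaction of \<open>I - C\<close> with \<open>C\<close>. Every point of \<open>I - C\<close> lies in one of the \<open>2 ^ m\<close>
  gaps of length \<open>a ^ (m + 1)\<close> cut out of the stage-\<open>m\<close> intervals; integrating the kernel
  first over \<open>C\<close> and then over a gap of length \<open>l\<close> gives \<open>O(l powr (1 - s))\<close>, and these
  terms sum to the upper bound.

  For the lower bound let \<open>2 ^ -k = \<delta> \<approx> a ^ (m + 1)\<close> and pair each such gap with the
  stage-\<open>k\<close> interval adjacent to it on the right. That interval contains at least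
  \<open>mass * \<delta>\<close> of \<open>C\<close>, because the gaps later removed from it form a geometric series.
  Its points in \<open>C\<close> and the last \<open>\<delta>\<close> of the gap are within \<open>2 \<delta>\<close> of each other, so
  the pair contributes at least \<open>c \<delta> powr (1 - s)\<close>; the strips of different gaps are
  disjoint, so these contributions add up.\<close>

lemma powr_power_commute:
  fixes x :: real assumes "0 < x" shows "(x ^ n) powr t = (x powr t) ^ n"
  using assms by (simp add: powr_power powr_realpow[symmetric] powr_powr mult.commute)

lemma sum_le_if_single_nonzero:
  fixes f :: "'i \<Rightarrow> 'b::canonically_ordered_monoid_add"
  assumes "finite A" "\<And>i. i \<in> A \<Longrightarrow> f i \<le> B"
    and "\<And>i j. i \<in> A \<Longrightarrow> j \<in> A \<Longrightarrow> f i \<noteq> 0 \<Longrightarrow> f j \<noteq> 0 \<Longrightarrow> i = j"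
  shows "sum f A \<le> B"
proof (cases "\<exists>i\<in>A. f i \<noteq> 0")
  case True
  then obtain i where i: "i \<in> A" "f i \<noteq> 0" by blast
  have "sum f (A - {i}) = 0" using assms(3) i by (intro sum.neutral) blast
  then have "sum f A = f i" using assms(1) i(1) by (simp add: sum.remove)
  then show ?thesis using assms(2) i by simp
next
  case False
  then show ?thesis by (simp add: sum.neutral)
qed

definition dyadic_exp :: "real \<Rightarrow> nat" where
  "dyadic_exp t = (LEAST k. (1/2::real) ^ k \<le> t)"

lemma dyadic_exp_bounds:
  fixes t :: real assumes "0 < t" "t < 1"
  shows "(1/2) ^ dyadic_exp t \<le> t" and "t < 2 * (1/2) ^ dyadic_exp t"
proof -
  have "\<exists>k. (1/2::real) ^ k \<le> t"
    using real_arch_pow_inv[of t "1/2"] assms(1) by (auto intro: less_imp_le)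
  then show le: "(1/2) ^ dyadic_exp t \<le> t" unfolding dyadic_exp_def by (rule LeastI_ex)
  then have pos: "dyadic_exp t \<noteq> 0" using assms(2) by (intro notI) simp
  have "\<not> (1/2::real) ^ (dyadic_exp t - 1) \<le> t"
    unfolding dyadic_exp_def by (rule not_less_Least) (use pos in \<open>simp add: dyadic_exp_def\<close>)
  moreover have "(1/2::real) ^ (dyadic_exp t - 1) = 2 * (1/2) ^ dyadic_exp t"
    using pos by (cases "dyadic_exp t") auto
  ultimately show "t < 2 * (1/2) ^ dyadic_exp t" by simp
qed

section \<open>Comparison with the kernel \<open>\<bar>x - y\<bar> powr -(1+s)\<close>\<close>

lemma nn_integral_dist_powr_atLeast:
  fixes x g s :: real assumes "x < g" "0 < s"
  shows "(\<integral>\<^sup>+y. ennreal (\<bar>x - y\<bar> powr -(1+s)) * indicator {g..} y \<partial>lborel)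
    = ennreal ((g - x) powr -s / s)"
proof -
  have "(\<integral>\<^sup>+y. ennreal (\<bar>x - y\<bar> powr -(1+s)) * indicator {g..} y \<partial>lborel)
      = ennreal \<bar>1\<bar> * (\<integral>\<^sup>+t. ennreal (\<bar>x - (x + 1 * t)\<bar> powr -(1+s)) *
          indicator {g..} (x + 1 * t) \<partial>lborel)"
    by (rule nn_integral_real_affine) auto
  also have "\<dots> = (\<integral>\<^sup>+t. ennreal (t powr -(1+s)) * indicator {g-x..} t \<partial>lborel)"
    using assms by (auto simp: indicator_def intro!: nn_integral_cong)
  also have "\<dots> = ennreal (- ((g-x) powr (-(1+s)+1)) / (-(1+s)+1))"
    using assms by (intro nn_integral_has_integral_lebesgue' has_integral_powr_to_inf) auto
  finally show ?thesis by simp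
qed

lemma nn_integral_dist_powr_atMost:
  fixes x g s :: real assumes "g < x" "0 < s"
  shows "(\<integral>\<^sup>+y. ennreal (\<bar>x - y\<bar> powr -(1+s)) * indicator {..g} y \<partial>lborel)
    = ennreal ((x - g) powr -s / s)"
proof -
  have "(\<integral>\<^sup>+y. ennreal (\<bar>x - y\<bar> powr -(1+s)) * indicator {..g} y \<partial>lborel)
      = ennreal \<bar>-1\<bar> * (\<integral>\<^sup>+t. ennreal (\<bar>x - (x + (-1) * t)\<bar> powr -(1+s)) *
          indicator {..g} (x + (-1) * t) \<partial>lborel)"
    by (rule nn_integral_real_affine) auto
  also have "\<dots> = (\<integral>\<^sup>+t. ennreal (t powr -(1+s)) * indicator {x-g..} t \<partial>lborel)"
    using assms by (auto simp: indicator_def intro!: nn_integral_cong)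
  also have "\<dots> = ennreal (- ((x-g) powr (-(1+s)+1)) / (-(1+s)+1))"
    using assms by (intro nn_integral_has_integral_lebesgue' has_integral_powr_to_inf) auto
  finally show ?thesis by simp
qed

lemma nn_integral_powr_dist_left_end:
  fixes g1 g2 s :: real assumes "g1 < g2" "s < 1"
  shows "(\<integral>\<^sup>+x. ennreal ((x - g1) powr -s) * indicator {g1..g2} x \<partial>lborel)
    = ennreal ((g2 - g1) powr (1-s) / (1-s))"
proof -
  have "(\<integral>\<^sup>+x. ennreal ((x - g1) powr -s) * indicator {g1..g2} x \<partial>lborel)
      = ennreal \<bar>1\<bar> * (\<integral>\<^sup>+t. ennreal (((g1 + 1 * t) - g1) powr -s) *
          indicator {g1..g2} (g1 + 1 * t) \<partial>lborel)"
    by (rule nn_integral_real_affine) auto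
  also have "\<dots> = (\<integral>\<^sup>+t. ennreal (t powr -s) * indicator {0..g2-g1} t \<partial>lborel)"
    using assms by (auto simp: indicator_def intro!: nn_integral_cong)
  also have "\<dots> = ennreal ((g2-g1) powr (-s+1) / (-s+1))"
    using assms by (intro nn_integral_has_integral_lebesgue' has_integral_powr_from_0) auto
  finally show ?thesis by simp
qed

lemma nn_integral_powr_dist_right_end:
  fixes g1 g2 s :: real assumes "g1 < g2" "s < 1"
  shows "(\<integral>\<^sup>+x. ennreal ((g2 - x) powr -s) * indicator {g1..g2} x \<partial>lborel)
    = ennreal ((g2 - g1) powr (1-s) / (1-s))"
proof -
  have "(\<integral>\<^sup>+x. ennreal ((g2 - x) powr -s) * indicator {g1..g2} x \<partial>lborel)
      = ennreal \<bar>-1\<bar> * (\<integral>\<^sup>+t. ennreal ((g2 - (g2 + (-1) * t)) powr -s) *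
          indicator {g1..g2} (g2 + (-1) * t) \<partial>lborel)"
    by (rule nn_integral_real_affine) auto
  also have "\<dots> = (\<integral>\<^sup>+t. ennreal (t powr -s) * indicator {0..g2-g1} t \<partial>lborel)"
    using assms by (auto simp: indicator_def intro!: nn_integral_cong)
  also have "\<dots> = ennreal ((g2-g1) powr (-s+1) / (-s+1))"
    using assms by (intro nn_integral_has_integral_lebesgue' has_integral_powr_from_0) auto
  finally show ?thesis by simp
qed

lemma ball_I_meas_bounds:
  fixes x y :: real assumes "x \<in> {0..1}" "y \<in> {0..1}" "x \<noteq> y"
  shows "\<bar>x - y\<bar> \<le> ball_I_meas x \<bar>x - y\<bar>" and "ball_I_meas x \<bar>x - y\<bar> \<le> 2 * \<bar>x - y\<bar>"
proof -
  define r where "r = \<bar>x - y\<bar>"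
  define B where "B = {z \<in> {0..1}. \<bar>x - z\<bar> < r}"
  have r: "r > 0" using assms by (simp add: r_def)
  have B_eq: "B = {0..1} \<inter> {x - r <..< x + r}" by (auto simp: B_def abs_less_iff)
  have "emeasure lborel B \<le> emeasure lborel {x - r <..< x + r}"
    unfolding B_eq by (intro emeasure_mono) auto
  then have upper: "emeasure lborel B \<le> ennreal (2 * r)" using r by simp
  have "{min x y <..< max x y} \<subseteq> B" using assms by (auto simp: B_def r_def)
  then have "emeasure lborel {min x y <..< max x y} \<le> emeasure lborel B"
    unfolding B_eq by (intro emeasure_mono) auto
  moreover have "max x y - min x y = r" by (auto simp: r_def)
  ultimately have lower: "ennreal r \<le> emeasure lborel B" by simp
  have "emeasure lborel B = ennreal (measure lborel B)"
    using upper by (intro emeasure_eq_ennreal_measure) (auto simp: top_unique)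
  moreover have "ball_I_meas x r = measure lborel B" by (simp add: ball_I_meas_def B_def)
  ultimately show "r \<le> ball_I_meas x r" "ball_I_meas x r \<le> 2 * r"
    using upper lower r by (simp_all add: ennreal_le_iff2)
qed

definition besov_kernel :: "real \<Rightarrow> real \<Rightarrow> real \<Rightarrow> real" where
  "besov_kernel s x y = \<bar>x - y\<bar> powr -(1+s)"

lemma measurable_besov_kernel_pair[measurable]:
  "(\<lambda>(x, y). besov_kernel s x y) \<in> borel_measurable (lborel \<Otimes>\<^sub>M lborel)"
  unfolding besov_kernel_def by measurable

lemma measurable_besov_kernel[measurable]: "besov_kernel s x \<in> borel_measurable lborel"
  unfolding besov_kernel_def by measurable

lemma besov_kernel_commute: "besov_kernel s x y = besov_kernel s y x"
  by (simp add: besov_kernel_def abs_minus_commute)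

lemma besov_integrand_bounds:
  fixes u :: "real \<Rightarrow> real"
  assumes "x \<in> {0..1}" "y \<in> {0..1}"
  shows "\<bar>u y - u x\<bar> / (\<bar>x - y\<bar> powr s * ball_I_meas x \<bar>x - y\<bar>) \<le> \<bar>u y - u x\<bar> * besov_kernel s x y"
      (is "?F \<le> ?K")
    and "\<bar>u y - u x\<bar> * besov_kernel s x y / 2 \<le> \<bar>u y - u x\<bar> / (\<bar>x - y\<bar> powr s * ball_I_meas x \<bar>x - y\<bar>)"
proof -
  define r where "r = \<bar>x - y\<bar>"
  define b where "b = ball_I_meas x r"
  define d where "d = \<bar>u y - u x\<bar>"
  have "d / (r powr s * b) \<le> d * besov_kernel s x y \<and> d * besov_kernel s x y / 2 \<le> d / (r powr s * b)"
  proof (cases "x = y")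
    case False
    then have r: "r > 0" by (simp add: r_def)
    have b: "r \<le> b" "b \<le> 2 * r"
      using ball_I_meas_bounds[OF assms False] by (simp_all add: b_def r_def)
    have "besov_kernel s x y = 1 / r powr (1+s)"
      unfolding besov_kernel_def r_def[symmetric] by (rule powr_minus_divide)
    moreover have "r powr (1+s) = r powr s * r" using r by (simp add: powr_add)
    moreover have "d / (r powr s * b) \<le> d / (r powr s * r)" "d / (2 * (r powr s * r)) \<le> d / (r powr s * b)"
      using b r by (auto simp: d_def intro!: divide_left_mono mult_pos_pos)
    ultimately show ?thesis by simp
  qed (simp add: d_def)
  then show "?F \<le> ?K" "?K / 2 \<le> ?F" by (simp_all add: d_def r_def b_def)
qed

lemma nn_integral_unit_square_mono:
  assumes "\<And>x y. x \<in> {0..1} \<Longrightarrow> y \<in> {0..1} \<Longrightarrow> f x y \<le> g x y"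
  shows "(\<integral>\<^sup>+x. (\<integral>\<^sup>+y. f x y * indicator {0..1} y \<partial>lborel) * indicator {0..1} x \<partial>lborel)
    \<le> (\<integral>\<^sup>+x. (\<integral>\<^sup>+y. g x y * indicator {0..1} y \<partial>lborel) * indicator {0..1} x \<partial>lborel)"
proof (intro nn_integral_mono)
  fix x
  show "(\<integral>\<^sup>+y. f x y * indicator {0..1} y \<partial>lborel) * indicator {0..1} x
      \<le> (\<integral>\<^sup>+y. g x y * indicator {0..1} y \<partial>lborel) * indicator {0..1} x"
    using assms by (cases "x \<in> {0..1}") (auto intro!: nn_integral_mono split: split_indicator)
qed

lemma besov_energy_le_kernel:
  "besov_energy s u \<le> (\<integral>\<^sup>+x. (\<integral>\<^sup>+y. ennreal (\<bar>u y - u x\<bar> * besov_kernel s x y)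
     * indicator {0..1} y \<partial>lborel) * indicator {0..1} x \<partial>lborel)"
  unfolding besov_energy_def by (intro nn_integral_unit_square_mono ennreal_leI besov_integrand_bounds)

lemma besov_energy_ge_kernel:
  "(\<integral>\<^sup>+x. (\<integral>\<^sup>+y. ennreal (\<bar>u y - u x\<bar> * besov_kernel s x y / 2)
     * indicator {0..1} y \<partial>lborel) * indicator {0..1} x \<partial>lborel) \<le> besov_energy s u"
  unfolding besov_energy_def by (intro nn_integral_unit_square_mono ennreal_leI besov_integrand_bounds)

lemma kernel_energy_indicator:
  assumes [measurable]: "A \<in> sets borel" and "A \<subseteq> {0..1}"
  shows "(\<integral>\<^sup>+x. (\<integral>\<^sup>+y. ennreal (\<bar>indicator A y - indicator A x\<bar> * besov_kernel s x y)
      * indicator {0..1} y \<partial>lborel) * indicator {0..1} x \<partial>lborel)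
    = 2 * (\<integral>\<^sup>+x. (\<integral>\<^sup>+y. ennreal (besov_kernel s x y) * indicator A y \<partial>lborel)
      * indicator ({0..1} - A) x \<partial>lborel)"
proof -
  define g where
    "g x y = ennreal (besov_kernel s x y) * indicator A y * indicator ({0..1} - A) x" for x y
  have [measurable]: "(\<lambda>(x, y). g x y) \<in> borel_measurable (lborel \<Otimes>\<^sub>M lborel)"
    unfolding g_def by measurable
  have split: "(\<integral>\<^sup>+y. ennreal (\<bar>indicator A y - indicator A x\<bar> * besov_kernel s x y)
      * indicator {0..1} y \<partial>lborel) * indicator {0..1} x = (\<integral>\<^sup>+y. g x y + g y x \<partial>lborel)" for x
    using assms(2)
    by (cases "x \<in> {0..1}")
       (auto simp: g_def indicator_def besov_kernel_commute intro!: nn_integral_cong)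
  have swap: "(\<integral>\<^sup>+x. (\<integral>\<^sup>+y. g y x \<partial>lborel) \<partial>lborel) = (\<integral>\<^sup>+x. (\<integral>\<^sup>+y. g x y \<partial>lborel) \<partial>lborel)"
    by (rule lborel_pair.Fubini') measurable
  have "(\<integral>\<^sup>+x. (\<integral>\<^sup>+y. g x y + g y x \<partial>lborel) \<partial>lborel)
      = (\<integral>\<^sup>+x. (\<integral>\<^sup>+y. g x y \<partial>lborel) \<partial>lborel) + (\<integral>\<^sup>+x. (\<integral>\<^sup>+y. g y x \<partial>lborel) \<partial>lborel)"
    by (subst nn_integral_add[symmetric]; measurable; intro nn_integral_cong nn_integral_add) measurable
  also have "\<dots> = 2 * (\<integral>\<^sup>+x. (\<integral>\<^sup>+y. g x y \<partial>lborel) \<partial>lborel)"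
    by (simp add: swap mult_2)
  finally show ?thesis
    by (simp add: split g_def nn_integral_multc)
qed

section \<open>Geometry of the construction\<close>

declare cantor_stage.simps(2)[simp del]

locale fat_cantor_construction =
  fixes a :: real
  assumes a_pos: "0 < a" and a_less: "a < 1/3"
begin

abbreviation stage :: "nat \<Rightarrow> (real \<times> real) set" where
  "stage \<equiv> cantor_stage a"

definition gap_left :: "nat \<Rightarrow> real \<times> real \<Rightarrow> real" where
  "gap_left m p = (fst p + snd p) / 2 - a ^ Suc m / 2"

definition gap_right :: "nat \<Rightarrow> real \<times> real \<Rightarrow> real" where
  "gap_right m p = (fst p + snd p) / 2 + a ^ Suc m / 2"

definition gap :: "nat \<Rightarrow> real \<times> real \<Rightarrow> real set" where
  "gap m p = {gap_left m p <..< gap_right m p}"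

definition children :: "nat \<Rightarrow> real \<times> real \<Rightarrow> (real \<times> real) set" where
  "children m p = {(fst p, gap_left m p), (gap_right m p, snd p)}"

definition ivl :: "real \<times> real \<Rightarrow> real set" where
  "ivl p = {fst p..snd p}"

definition nested :: "real \<times> real \<Rightarrow> real \<times> real \<Rightarrow> bool" where
  "nested q p \<longleftrightarrow> fst p \<le> fst q \<and> snd q \<le> snd p"

definition separated :: "real \<times> real \<Rightarrow> real \<times> real \<Rightarrow> bool" where
  "separated p q \<longleftrightarrow> snd p < fst q \<or> snd q < fst p"

text \<open>\<open>mass\<close> is the measure of \<open>C\<^sub>a\<close>. A stage-\<open>m\<close> interval carries the share \<open>mass / 2 ^ m\<close>
  of it together with the gaps \<open>2 ^ k * a ^ (m + 1 + k)\<close> removed from it later, which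
  explains \<open>stage_len\<close>.\<close>
definition mass :: real where
  "mass = (1 - 3 * a) / (1 - 2 * a)"

definition stage_len :: "nat \<Rightarrow> real" where
  "stage_len m = mass / 2 ^ m + a ^ Suc m / (1 - 2 * a)"

lemma nested_ivl: "nested q p \<Longrightarrow> ivl q \<subseteq> ivl p"
  by (auto simp: nested_def ivl_def)

lemma separated_ivl: "separated p q \<Longrightarrow> ivl p \<inter> ivl q = {}"
  by (auto simp: separated_def ivl_def)

lemma mass_pos: "0 < mass"
  using a_pos a_less by (simp add: mass_def)

lemma mass_add: "mass + a / (1 - 2 * a) = 1"
proof -
  have "mass + a / (1 - 2 * a) = ((1 - 3 * a) + a) / (1 - 2 * a)"
    unfolding mass_def by (rule add_divide_distrib[symmetric])
  then show ?thesis using a_less by simp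
qed

lemma gap_right_minus_left: "gap_right m p - gap_left m p = a ^ Suc m"
  by (simp add: gap_left_def gap_right_def)

lemma emeasure_gap: "emeasure lborel (gap m p) = ennreal (a ^ Suc m)"
proof -
  have "0 < a ^ Suc m" using a_pos by simp
  then have "gap_left m p \<le> gap_right m p" using gap_right_minus_left[of m p] by linarith
  then show ?thesis by (simp add: gap_def gap_right_minus_left)
qed

lemma stage_Suc: "stage (Suc m) = (\<Union>p\<in>stage m. children m p)"
  by (auto simp: cantor_stage.simps(2) children_def gap_left_def gap_right_def split_def)

lemma stage_SucE:
  assumes "q \<in> stage (Suc m)"
  obtains p where "p \<in> stage m" "q \<in> children m p"
  using assms stage_Suc by blast

lemma stage_len_pos: "0 < stage_len m"
  using mass_pos a_pos a_less by (simp add: stage_len_def add_pos_pos)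

lemma stage_len_Suc: "stage_len (Suc m) = (stage_len m - a ^ Suc m) / 2"
  using a_less by (simp add: stage_len_def field_simps)

lemma power_less_stage_len: "a ^ Suc m < stage_len m"
proof -
  have "a ^ Suc m \<le> a ^ Suc m / (1 - 2 * a)"
    using a_pos a_less by (simp add: field_simps)
  moreover have "0 < mass / 2 ^ m" using mass_pos by simp
  ultimately show ?thesis by (simp add: stage_len_def)
qed

lemma stage_len_le: "stage_len m \<le> 1 / 2 ^ m"
proof -
  have "(2 * a) ^ m \<le> 1" using a_pos a_less by (intro power_le_one) auto
  then have "a * (2 * a) ^ m / (1 - 2 * a) \<le> a / (1 - 2 * a)"
    using a_pos a_less by (intro divide_right_mono) (auto simp: mult_left_le)
  moreover have "stage_len m = (mass + a * (2 * a) ^ m / (1 - 2 * a)) / 2 ^ m"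
    by (simp add: stage_len_def add_divide_distrib power_mult_distrib)
  ultimately show ?thesis using mass_add by (simp add: divide_right_mono)
qed

lemma children_nested:
  assumes "snd p - fst p = stage_len m" "q \<in> children m p"
  shows "nested q p" and "snd q - fst q = stage_len (Suc m)"
  using assms power_less_stage_len[of m] stage_len_pos[of m] a_pos
  by (auto simp: children_def gap_left_def gap_right_def nested_def stage_len_Suc field_simps)

lemma stage_interval:
  assumes "p \<in> stage m"
  shows "snd p - fst p = stage_len m" and "ivl p \<subseteq> {0..1}"
proof -
  have "snd p - fst p = stage_len m \<and> 0 \<le> fst p \<and> snd p \<le> 1"
    using assms
  proof (induction m arbitrary: p)
    case 0
    then show ?case using mass_add by (simp add: stage_len_def)
  next
    case (Suc m)
    then obtain q where q: "q \<in> stage m" "p \<in> children m q" by (blast elim: stage_SucE)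
    with Suc.IH[OF q(1)] children_nested[of q m p] show ?case by (auto simp: nested_def)
  qed
  then show "snd p - fst p = stage_len m" "ivl p \<subseteq> {0..1}" by (auto simp: ivl_def)
qed

lemma stage_nested_children:
  assumes "p \<in> stage m" "q \<in> children m p"
  shows "nested q p"
  using assms stage_interval children_nested by blast

lemma stage_separated:
  "p \<in> stage m \<Longrightarrow> q \<in> stage m \<Longrightarrow> p \<noteq> q \<Longrightarrow> separated p q"
proof (induction m arbitrary: p q)
  case 0
  then show ?case by simp
next
  case (Suc m)
  obtain p' where p': "p' \<in> stage m" "p \<in> children m p'"
    using Suc.prems(1) by (blast elim: stage_SucE)
  obtain q' where q': "q' \<in> stage m" "q \<in> children m q'"
    using Suc.prems(2) by (blast elim: stage_SucE)
  show ?case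
  proof (cases "p' = q'")
    case True
    then show ?thesis
      using p' q' Suc.prems(3) a_pos by (auto simp: children_def gap_left_def gap_right_def separated_def)
  next
    case False
    then have "separated p' q'" using Suc.IH p'(1) q'(1) by blast
    moreover have "nested p p'" "nested q q'" using stage_nested_children p' q' by blast+
    ultimately show ?thesis by (auto simp: separated_def nested_def)
  qed
qed

lemma stage_nested_ancestor: "q \<in> stage (m + k) \<Longrightarrow> \<exists>p\<in>stage m. nested q p"
proof (induction k arbitrary: q)
  case 0
  then show ?case by (auto simp: nested_def)
next
  case (Suc k)
  then obtain q' where q': "q' \<in> stage (m + k)" "q \<in> children (m + k) q'"
    by (metis add_Suc_right stage_SucE)
  obtain p where "p \<in> stage m" "nested q' p" using Suc.IH q'(1) by blast
  moreover have "nested q q'" using stage_nested_children q' by blast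
  ultimately show ?case unfolding nested_def by (meson order_trans)
qed

lemma gap_subset_ivl: "p \<in> stage m \<Longrightarrow> gap m p \<subseteq> ivl p"
  using stage_interval(1)[of p m] power_less_stage_len[of m]
  by (auto simp: gap_def gap_left_def gap_right_def ivl_def field_simps)

lemma gap_disjoint_children: "q \<in> children m p \<Longrightarrow> gap m p \<inter> ivl q = {}"
  by (auto simp: gap_def ivl_def children_def)

lemma gap_disjoint_later_stage:
  assumes "p \<in> stage m" "q \<in> stage n" "m < n"
  shows "gap m p \<inter> ivl q = {}"
proof -
  obtain k where "n = Suc m + k" using assms(3) less_iff_Suc_add by blast
  then obtain q' where q': "q' \<in> stage (Suc m)" "nested q q'"
    using assms(2) stage_nested_ancestor[of q "Suc m" k] by blast
  obtain p' where p': "p' \<in> stage m" "q' \<in> children m p'" using q'(1) by (rule stage_SucE)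
  have "gap m p \<inter> ivl q' = {}"
  proof (cases "p = p'")
    case True
    then show ?thesis using gap_disjoint_children[OF p'(2)] by simp
  next
    case False
    then have "ivl p \<inter> ivl p' = {}" by (intro separated_ivl stage_separated[OF assms(1) p'(1)])
    moreover have "ivl q' \<subseteq> ivl p'" by (intro nested_ivl stage_nested_children[OF p'])
    ultimately have "ivl p \<inter> ivl q' = {}" by blast
    then show ?thesis using gap_subset_ivl[OF assms(1)] by blast
  qed
  then show ?thesis using nested_ivl[OF q'(2)] by blast
qed

lemma gaps_disjoint:
  assumes "p \<in> stage m" "q \<in> stage n" "(m, p) \<noteq> (n, q)"
  shows "gap m p \<inter> gap n q = {}"
proof -
  consider "m = n" | "m < n" | "n < m" by linarith
  then show ?thesis
  proof cases
    case 1
    then have "separated p q" using assms stage_separated by blast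
    then show ?thesis using gap_subset_ivl[OF assms(1)] gap_subset_ivl[OF assms(2)] separated_ivl 1
      by blast
  next
    case 2
    then show ?thesis using gap_disjoint_later_stage[OF assms(1,2)] gap_subset_ivl[OF assms(2)] by blast
  next
    case 3
    then show ?thesis using gap_disjoint_later_stage[OF assms(2,1)] gap_subset_ivl[OF assms(1)] by blast
  qed
qed

lemma stage_children_disjoint:
  assumes "p \<in> stage m" "q \<in> stage m" "p \<noteq> q"
  shows "children m p \<inter> children m q = {}"
proof (rule ccontr)
  assume "children m p \<inter> children m q \<noteq> {}"
  then obtain r where r: "r \<in> children m p" "r \<in> children m q" by blast
  have "nested r p" "nested r q" "snd r - fst r = stage_len (Suc m)"
    using children_nested[OF stage_interval(1)[OF assms(1)] r(1)]
      children_nested[OF stage_interval(1)[OF assms(2)] r(2)] by auto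
  moreover have "separated p q" using stage_separated assms by blast
  ultimately show False using stage_len_pos[of "Suc m"] by (auto simp: separated_def nested_def)
qed

lemma finite_card_stage: "finite (stage m) \<and> card (stage m) = 2 ^ m"
proof (induction m)
  case 0
  then show ?case by simp
next
  case (Suc m)
  have children: "finite (children m p) \<and> card (children m p) = 2" if "p \<in> stage m" for p
  proof -
    have "0 < a ^ Suc m" using a_pos by simp
    then have "fst p < gap_right m p"
      using stage_interval(1)[OF that] stage_len_pos[of m] by (simp add: gap_right_def field_simps)
    then show ?thesis by (simp add: children_def)
  qed
  have "children m p \<inter> children m q = {}" if "p \<in> stage m" "q \<in> stage m" "p \<noteq> q" for p q
    using stage_children_disjoint that by blast
  then have "card (\<Union>p\<in>stage m. children m p) = (\<Sum>p\<in>stage m. card (children m p))"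
    using Suc.IH children by (intro card_UN_disjoint) auto
  also have "\<dots> = 2 ^ Suc m" using Suc.IH children by simp
  finally have "card (\<Union>p\<in>stage m. children m p) = 2 ^ Suc m" .
  moreover have "finite (\<Union>p\<in>stage m. children m p)" using Suc.IH children by auto
  ultimately show ?case unfolding stage_Suc by blast
qed

lemma finite_stage: "finite (stage m)"
  using finite_card_stage by blast

lemma card_stage: "card (stage m) = 2 ^ m"
  using finite_card_stage by blast

lemma sum_stage_const: "0 \<le> c \<Longrightarrow> (\<Sum>p\<in>stage m. ennreal c) = ennreal (2 ^ m * c)"
  by (simp add: card_stage ennreal_mult ennreal_of_nat_eq_real_of_nat)

lemma leftmost_descendant:
  "p \<in> stage m \<Longrightarrow> (fst p, fst p + stage_len (m + k)) \<in> stage (m + k)"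
proof (induction k)
  case 0
  then have "fst p + stage_len (m + 0) = snd p" using stage_interval(1)[of p m] by simp
  then show ?case using 0 by simp
next
  case (Suc k)
  from Suc.IH[OF Suc.prems]
  have "(fst p, gap_left (m + k) (fst p, fst p + stage_len (m + k))) \<in> stage (Suc (m + k))"
    unfolding stage_Suc by (rule UN_I) (simp add: children_def)
  moreover have "gap_left (m + k) (fst p, fst p + stage_len (m + k)) = fst p + stage_len (Suc (m + k))"
    by (simp add: gap_left_def stage_len_Suc field_simps)
  ultimately show ?case by (simp only: add_Suc_right)
qed

lemma right_child: "p \<in> stage m \<Longrightarrow> (gap_right m p, snd p) \<in> stage (Suc m)"
  unfolding stage_Suc by (erule UN_I) (simp add: children_def)

abbreviation C :: "real set" where
  "C \<equiv> fat_cantor a"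

definition removed :: "real set" where
  "removed = (\<Union>m. \<Union>p\<in>stage m. gap m p)"

lemma fat_cantor_eq: "C = {0..1} - removed"
proof -
  have "removed_intervals a (Suc m) = gap m ` stage m" for m
    by (auto simp: removed_intervals_def gap_def gap_left_def gap_right_def split_def)
  moreover have "{1..} = range Suc"
    by (auto simp: image_iff Suc_le_eq gr0_conv_Suc)
  ultimately show ?thesis
    by (simp add: fat_cantor_def removed_def image_image)
qed

lemma fat_cantor_subset: "C \<subseteq> {0..1}"
  unfolding fat_cantor_eq by blast

lemma fat_cantor_closed: "closed C"
  unfolding fat_cantor_eq removed_def gap_def by (intro closed_Diff open_UN ballI) auto

lemma fat_cantor_borel[measurable]: "C \<in> sets borel"
  using fat_cantor_closed by (rule borel_closed)

lemma gap_disjoint_fat_cantor: "p \<in> stage m \<Longrightarrow> gap m p \<inter> C = {}"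
  unfolding fat_cantor_eq removed_def by blast

lemma gap_subset_unit: "p \<in> stage m \<Longrightarrow> gap m p \<subseteq> {0..1}"
  using gap_subset_ivl stage_interval(2) by blast

lemma unit_minus_fat_cantor_in_gap:
  assumes "x \<in> {0..1} - C"
  obtains m p where "p \<in> stage m" "x \<in> gap m p"
  using assms unfolding fat_cantor_eq removed_def by blast

primrec descendants :: "nat \<Rightarrow> real \<times> real \<Rightarrow> nat \<Rightarrow> (real \<times> real) set" where
  "descendants m J 0 = {J}"
| "descendants m J (Suc k) = (\<Union>q\<in>descendants m J k. children (m + k) q)"

lemma finite_card_descendants: "finite (descendants m J k) \<and> card (descendants m J k) \<le> 2 ^ k"
proof (induction k)
  case 0
  then show ?case by simp
next
  case (Suc k)
  have children: "finite (children i q) \<and> card (children i q) \<le> 2" for i q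
    by (auto simp: children_def card_insert_if)
  have "card (descendants m J (Suc k)) \<le> (\<Sum>q\<in>descendants m J k. card (children (m + k) q))"
    by (simp add: card_UN_le Suc.IH)
  also have "\<dots> \<le> (\<Sum>q\<in>descendants m J k. 2)"
    by (intro sum_mono) (use children in auto)
  finally show ?case using Suc.IH children by simp
qed

lemma descendants_if_nested:
  "J \<in> stage m \<Longrightarrow> q \<in> stage (m + k) \<Longrightarrow> nested q J \<Longrightarrow> q \<in> descendants m J k"
proof (induction k arbitrary: q)
  case 0
  have "fst q \<le> snd q" using stage_interval(1)[of q m] stage_len_pos[of m] 0 by simp
  with 0 show ?case using stage_separated[of q m J] by (auto simp: separated_def nested_def)
next
  case (Suc k)
  obtain q' where q': "q' \<in> stage (m + k)" "q \<in> children (m + k) q'"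
    using Suc.prems(2) by (metis add_Suc_right stage_SucE)
  obtain J' where J': "J' \<in> stage m" "nested q' J'" using stage_nested_ancestor q'(1) by blast
  have "fst q \<le> snd q"
    using stage_interval(1)[OF Suc.prems(2)] stage_len_pos[of "m + Suc k"] by simp
  moreover have "nested q q'" using stage_nested_children q' by blast
  ultimately have "\<not> separated J' J"
    using J'(2) Suc.prems(3) by (auto simp: separated_def nested_def)
  then have "J' = J" using stage_separated J'(1) Suc.prems(1) by blast
  then have "q' \<in> descendants m J k" using Suc.IH[OF Suc.prems(1) q'(1)] J'(2) by simp
  then show ?case using q'(2) by auto
qed

definition later_gaps :: "nat \<Rightarrow> real \<times> real \<Rightarrow> real set" where
  "later_gaps m J = (\<Union>k. \<Union>q\<in>descendants m J k. gap (m + k) q)"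

lemma stage_ivl_minus_later_gaps:
  assumes J: "J \<in> stage m"
  shows "ivl J - later_gaps m J \<subseteq> C"
proof
  fix x assume x: "x \<in> ivl J - later_gaps m J"
  have "x \<notin> gap i p" if p: "p \<in> stage i" for i p
  proof (cases "i < m")
    case True
    then show ?thesis using gap_disjoint_later_stage[OF p J True] x by blast
  next
    case False
    then obtain k where i: "i = m + k" using le_Suc_ex not_less by blast
    obtain J' where J': "J' \<in> stage m" "nested p J'" using stage_nested_ancestor p i by blast
    show ?thesis
    proof
      assume gap: "x \<in> gap i p"
      then have "x \<in> ivl J'" using gap_subset_ivl[OF p] nested_ivl[OF J'(2)] by blast
      then have "J' = J" using x stage_separated[OF J'(1) J] separated_ivl by blast
      then have "p \<in> descendants m J k" using descendants_if_nested[OF J] p J'(2) i by simp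
      then show False using gap x i unfolding later_gaps_def by blast
    qed
  qed
  moreover have "x \<in> {0..1}" using x stage_interval(2)[OF J] by blast
  ultimately show "x \<in> C" unfolding fat_cantor_eq removed_def by blast
qed

lemma emeasure_later_gaps_le: "emeasure lborel (later_gaps m J) \<le> ennreal (a ^ Suc m / (1 - 2 * a))"
proof -
  have "emeasure lborel (later_gaps m J)
      \<le> (\<Sum>k. emeasure lborel (\<Union>q\<in>descendants m J k. gap (m + k) q))"
    unfolding later_gaps_def
    by (intro emeasure_subadditive_countably) (auto simp: gap_def intro!: borel_open open_UN)
  also have "\<dots> \<le> (\<Sum>k. ennreal (a ^ Suc m * (2 * a) ^ k))"
  proof (intro suminf_le allI)
    fix k
    have "emeasure lborel (\<Union>q\<in>descendants m J k. gap (m + k) q)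
        \<le> (\<Sum>q\<in>descendants m J k. emeasure lborel (gap (m + k) q))"
      using finite_card_descendants by (intro emeasure_subadditive_finite) (auto simp: gap_def)
    also have "\<dots> = of_nat (card (descendants m J k)) * ennreal (a ^ Suc (m + k))"
      by (simp add: emeasure_gap)
    also have "\<dots> \<le> of_nat (2 ^ k) * ennreal (a ^ Suc (m + k))"
      using finite_card_descendants[of m J k] by (intro mult_right_mono of_nat_mono) auto
    also have "\<dots> = ennreal (a ^ Suc m * (2 * a) ^ k)"
      using a_pos
      by (simp add: ennreal_mult power_add power_mult_distrib ennreal_of_nat_eq_real_of_nat mult_ac)
    finally show "emeasure lborel (\<Union>q\<in>descendants m J k. gap (m + k) q) \<le> ennreal (a ^ Suc m * (2 * a) ^ k)" .
  qed auto
  also have "\<dots> = ennreal (a ^ Suc m / (1 - 2 * a))"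
  proof -
    have "(\<lambda>k. (2 * a) ^ k) sums (1 / (1 - 2 * a))"
      using a_pos a_less by (intro geometric_sums) auto
    then have "(\<lambda>k. a ^ Suc m * (2 * a) ^ k) sums (a ^ Suc m / (1 - 2 * a))"
      using sums_mult by fastforce
    then show ?thesis using a_pos by (subst suminf_ennreal2) (auto simp: sums_iff)
  qed
  finally show ?thesis .
qed

lemma emeasure_fat_cantor_stage_ge:
  assumes J: "J \<in> stage m"
  shows "ennreal (mass / 2 ^ m) \<le> emeasure lborel (C \<inter> ivl J)"
proof -
  have [measurable]: "later_gaps m J \<in> sets borel"
    unfolding later_gaps_def gap_def by (intro borel_open open_UN) auto
  have "ennreal (stage_len m) = emeasure lborel (ivl J)"
    using stage_interval(1)[OF J] stage_len_pos[of m] by (simp add: ivl_def)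
  also have "\<dots> \<le> emeasure lborel ((ivl J - later_gaps m J) \<union> later_gaps m J)"
    by (intro emeasure_mono) (auto simp: ivl_def)
  also have "\<dots> \<le> emeasure lborel (ivl J - later_gaps m J) + emeasure lborel (later_gaps m J)"
    by (intro emeasure_subadditive) (auto simp: ivl_def)
  also have "\<dots> \<le> emeasure lborel (C \<inter> ivl J) + ennreal (a ^ Suc m / (1 - 2 * a))"
    using stage_ivl_minus_later_gaps[OF J] emeasure_later_gaps_le
    by (intro add_mono emeasure_mono) (auto simp: ivl_def)
  finally have "ennreal (a ^ Suc m / (1 - 2 * a)) + ennreal (mass / 2 ^ m)
      \<le> ennreal (a ^ Suc m / (1 - 2 * a)) + emeasure lborel (C \<inter> ivl J)"
    using mass_pos a_pos a_less
    by (simp add: stage_len_def ennreal_plus[symmetric] add_ac del: ennreal_plus)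
  then show ?thesis by (simp add: ennreal_add_left_cancel_le)
qed

definition gap_scale_exp :: "nat \<Rightarrow> nat" where
  "gap_scale_exp m = dyadic_exp (a ^ Suc m)"

definition gap_scale :: "nat \<Rightarrow> real" where
  "gap_scale m = (1/2) ^ gap_scale_exp m"

lemma gap_scale_bounds: "0 < gap_scale m" "gap_scale m \<le> a ^ Suc m" "a ^ Suc m < 2 * gap_scale m"
  and Suc_le_gap_scale_exp: "Suc m \<le> gap_scale_exp m"
proof -
  have less: "a ^ Suc m < (1/2) ^ Suc m" using a_pos a_less by (intro power_strict_mono) auto
  also have "(1/2::real) ^ Suc m \<le> 1" by (intro power_le_one) auto
  finally have "a ^ Suc m < 1" .
  then show "gap_scale m \<le> a ^ Suc m" "a ^ Suc m < 2 * gap_scale m"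
    using dyadic_exp_bounds[of "a ^ Suc m"] a_pos by (simp_all add: gap_scale_def gap_scale_exp_def)
  show "0 < gap_scale m" by (simp add: gap_scale_def)
  show "Suc m \<le> gap_scale_exp m"
  proof (rule ccontr)
    assume "\<not> Suc m \<le> gap_scale_exp m"
    then have "(1/2::real) ^ Suc m \<le> gap_scale m" unfolding gap_scale_def by (intro power_decreasing) auto
    then show False using less \<open>gap_scale m \<le> a ^ Suc m\<close> by simp
  qed
qed

text \<open>Next to the gap of \<open>p\<close> lies the \<open>block\<close>, a stage interval of length at most \<open>gap_scale m\<close>;
  every point of \<open>C\<close> in the block is within \<open>2 * gap_scale m\<close> of every point of the \<open>strip\<close>,
  the last \<open>gap_scale m\<close> of the gap.\<close>
definition block :: "nat \<Rightarrow> real \<times> real \<Rightarrow> real \<times> real" where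
  "block m p = (gap_right m p, gap_right m p + stage_len (gap_scale_exp m))"

definition strip :: "nat \<Rightarrow> real \<times> real \<Rightarrow> real set" where
  "strip m p = {gap_right m p - gap_scale m <..< gap_right m p}"

lemma block_stage: "p \<in> stage m \<Longrightarrow> block m p \<in> stage (gap_scale_exp m)"
  using leftmost_descendant[OF right_child, of p m "gap_scale_exp m - Suc m"] Suc_le_gap_scale_exp[of m]
  by (simp add: block_def)

lemma stage_len_gap_scale_exp_le: "stage_len (gap_scale_exp m) \<le> gap_scale m"
  using stage_len_le[of "gap_scale_exp m"] by (simp add: gap_scale_def power_one_over)

lemma strip_subset_gap: "strip m p \<subseteq> gap m p"
  using gap_scale_bounds[of m] gap_right_minus_left[of m p] by (auto simp: strip_def gap_def)

lemma emeasure_strip: "emeasure lborel (strip m p) = ennreal (gap_scale m)"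
  using gap_scale_bounds(1)[of m] by (simp add: strip_def)

end

section \<open>Upper and lower bounds\<close>

locale fat_cantor_besov = fat_cantor_construction +
  fixes s :: real
  assumes s_pos: "0 < s" and s_less: "s < 1"
begin

definition gap_potential :: "nat \<Rightarrow> real \<times> real \<Rightarrow> real \<Rightarrow> ennreal" where
  "gap_potential m p x = ennreal (1 / s) *
     (ennreal ((x - gap_left m p) powr -s) + ennreal ((gap_right m p - x) powr -s))"

lemma gap_potential_measurable[measurable]: "gap_potential m p \<in> borel_measurable borel"
  unfolding gap_potential_def by measurable

lemma nn_integral_kernel_from_gap_le:
  assumes p: "p \<in> stage m" and x: "x \<in> gap m p"
  shows "(\<integral>\<^sup>+y. ennreal (besov_kernel s x y) * indicator C y \<partial>lborel) \<le> gap_potential m p x"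
proof -
  have gl: "gap_left m p < x" and gr: "x < gap_right m p" using x by (auto simp: gap_def)
  have "(\<integral>\<^sup>+y. ennreal (besov_kernel s x y) * indicator C y \<partial>lborel)
      \<le> (\<integral>\<^sup>+y. ennreal (besov_kernel s x y) * indicator {..gap_left m p} y
            + ennreal (besov_kernel s x y) * indicator {gap_right m p..} y \<partial>lborel)"
  proof (intro nn_integral_mono)
    fix y
    show "ennreal (besov_kernel s x y) * indicator C y
        \<le> ennreal (besov_kernel s x y) * indicator {..gap_left m p} y
          + ennreal (besov_kernel s x y) * indicator {gap_right m p..} y"
    proof (cases "y \<in> C")
      case True
      then have "y \<notin> gap m p" using gap_disjoint_fat_cantor[OF p] by blast
      then have "y \<le> gap_left m p \<or> gap_right m p \<le> y" by (auto simp: gap_def)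
      then show ?thesis by (auto simp: indicator_def)
    qed simp
  qed
  also have "\<dots> = (\<integral>\<^sup>+y. ennreal (besov_kernel s x y) * indicator {..gap_left m p} y \<partial>lborel)
      + (\<integral>\<^sup>+y. ennreal (besov_kernel s x y) * indicator {gap_right m p..} y \<partial>lborel)"
    by (intro nn_integral_add) measurable
  also have "\<dots> = ennreal ((x - gap_left m p) powr -s / s) + ennreal ((gap_right m p - x) powr -s / s)"
    unfolding besov_kernel_def
      nn_integral_dist_powr_atMost[OF gl s_pos] nn_integral_dist_powr_atLeast[OF gr s_pos] ..
  also have "\<dots> = gap_potential m p x"
    using s_pos by (simp add: gap_potential_def distrib_left ennreal_mult'[symmetric])
  finally show ?thesis .
qed

lemma nn_integral_gap_potential_le:
  "(\<integral>\<^sup>+x. gap_potential m p x * indicator (gap m p) x \<partial>lborel)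
    \<le> ennreal (2 / (s * (1 - s)) * (a ^ Suc m) powr (1 - s))"
proof -
  let ?l = "gap_left m p" and ?r = "gap_right m p"
  have "0 < a ^ Suc m" using a_pos by simp
  then have lr: "?l < ?r" using gap_right_minus_left[of m p] by linarith
  have "(\<integral>\<^sup>+x. gap_potential m p x * indicator (gap m p) x \<partial>lborel)
      \<le> (\<integral>\<^sup>+x. gap_potential m p x * indicator {?l..?r} x \<partial>lborel)"
    by (intro nn_integral_mono) (auto simp: gap_def split: split_indicator)
  also have "\<dots> = ennreal (1 / s) * ((\<integral>\<^sup>+x. ennreal ((x - ?l) powr -s) * indicator {?l..?r} x \<partial>lborel)
       + (\<integral>\<^sup>+x. ennreal ((?r - x) powr -s) * indicator {?l..?r} x \<partial>lborel))"
    unfolding gap_potential_def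
    by (subst nn_integral_add[symmetric], measurable, subst nn_integral_cmult[symmetric], measurable)
       (simp add: mult_ac distrib_left distrib_right)
  also have "\<dots> = ennreal (1 / s) * (ennreal ((a ^ Suc m) powr (1 - s) / (1 - s))
       + ennreal ((a ^ Suc m) powr (1 - s) / (1 - s)))"
    using nn_integral_powr_dist_left_end[OF lr s_less] nn_integral_powr_dist_right_end[OF lr s_less]
    by (simp add: gap_right_minus_left)
  also have "\<dots> = ennreal (2 / (s * (1 - s)) * (a ^ Suc m) powr (1 - s))"
    using s_pos s_less
    by (simp add: ennreal_mult[symmetric] ennreal_plus[symmetric] del: ennreal_plus)
  finally show ?thesis .
qed

lemma sum_stage_gap_bound:
  "(\<Sum>p\<in>stage m. ennreal (2 / (s * (1 - s)) * (a ^ Suc m) powr (1 - s)))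
    = ennreal (1 / (s * (1 - s))) * ennreal ((2 * a powr (1 - s)) ^ Suc m)"
proof -
  have "(\<Sum>p\<in>stage m. ennreal (2 / (s * (1 - s)) * (a ^ Suc m) powr (1 - s)))
      = ennreal (2 ^ m * (2 / (s * (1 - s)) * (a ^ Suc m) powr (1 - s)))"
    using s_pos s_less by (intro sum_stage_const) simp
  also have "2 ^ m * (2 / (s * (1 - s)) * (a ^ Suc m) powr (1 - s))
      = 1 / (s * (1 - s)) * (2 * a powr (1 - s)) ^ Suc m"
    using powr_power_commute[OF a_pos, of "Suc m" "1 - s"]
    by (simp add: power_mult_distrib del: power_Suc) (simp add: field_simps)
  also have "ennreal \<dots> = ennreal (1 / (s * (1 - s))) * ennreal ((2 * a powr (1 - s)) ^ Suc m)"
    using s_pos s_less by (intro ennreal_mult) auto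
  finally show ?thesis .
qed

lemma nn_integral_kernel_outside_le:
  "(\<integral>\<^sup>+y. ennreal (besov_kernel s x y) * indicator C y \<partial>lborel) * indicator ({0..1} - C) x
    \<le> (\<Sum>m. \<Sum>p\<in>stage m. gap_potential m p x * indicator (gap m p) x)"
proof (cases "x \<in> {0..1} - C")
  case True
  then obtain m p where p: "p \<in> stage m" "x \<in> gap m p" by (rule unit_minus_fat_cantor_in_gap)
  have "(\<integral>\<^sup>+y. ennreal (besov_kernel s x y) * indicator C y \<partial>lborel)
      \<le> gap_potential m p x * indicator (gap m p) x"
    using nn_integral_kernel_from_gap_le[OF p] p(2) by simp
  also have "\<dots> \<le> (\<Sum>p\<in>stage m. gap_potential m p x * indicator (gap m p) x)"
    using p finite_stage by (intro member_le_sum) auto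
  also have "\<dots> \<le> (\<Sum>m. \<Sum>p\<in>stage m. gap_potential m p x * indicator (gap m p) x)"
    using sum_le_suminf[of "\<lambda>m. \<Sum>p\<in>stage m. gap_potential m p x * indicator (gap m p) x" "{m}"]
    by simp
  finally show ?thesis using True by simp
qed simp

lemma interaction_fat_cantor_le:
  "(\<integral>\<^sup>+x. (\<integral>\<^sup>+y. ennreal (besov_kernel s x y) * indicator C y \<partial>lborel)
      * indicator ({0..1} - C) x \<partial>lborel)
    \<le> ennreal (1 / (s * (1 - s))) * (\<Sum>m. ennreal ((2 * a powr (1 - s)) ^ Suc m))"
proof -
  let ?f = "\<lambda>m x. \<Sum>p\<in>stage m. gap_potential m p x * indicator (gap m p) x"
  have "(\<integral>\<^sup>+x. (\<integral>\<^sup>+y. ennreal (besov_kernel s x y) * indicator C y \<partial>lborel)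
      * indicator ({0..1} - C) x \<partial>lborel) \<le> (\<integral>\<^sup>+x. (\<Sum>m. ?f m x) \<partial>lborel)"
    by (intro nn_integral_mono nn_integral_kernel_outside_le)
  also have "\<dots> = (\<Sum>m. \<integral>\<^sup>+x. ?f m x \<partial>lborel)"
    by (intro nn_integral_suminf) (auto simp: gap_def)
  also have "\<dots> = (\<Sum>m. \<Sum>p\<in>stage m. \<integral>\<^sup>+x. gap_potential m p x * indicator (gap m p) x \<partial>lborel)"
    by (simp add: nn_integral_sum gap_def)
  also have "\<dots> \<le> (\<Sum>m. \<Sum>p\<in>stage m. ennreal (2 / (s * (1 - s)) * (a ^ Suc m) powr (1 - s)))"
    by (intro suminf_le sum_mono nn_integral_gap_potential_le) auto
  also have "\<dots> = (\<Sum>m. ennreal (1 / (s * (1 - s))) * ennreal ((2 * a powr (1 - s)) ^ Suc m))"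
    by (intro suminf_cong sum_stage_gap_bound)
  also have "\<dots> = ennreal (1 / (s * (1 - s))) * (\<Sum>m. ennreal ((2 * a powr (1 - s)) ^ Suc m))"
    by simp
  finally show ?thesis .
qed

lemma besov_energy_fat_cantor_le:
  "besov_energy s (indicator C)
    \<le> ennreal (2 / (s * (1 - s))) * (\<Sum>m. ennreal ((2 * a powr (1 - s)) ^ Suc m))"
proof -
  have "besov_energy s (indicator C)
      \<le> 2 * (\<integral>\<^sup>+x. (\<integral>\<^sup>+y. ennreal (besov_kernel s x y) * indicator C y \<partial>lborel)
          * indicator ({0..1} - C) x \<partial>lborel)"
    using besov_energy_le_kernel[of s "indicator C"]
    by (simp add: kernel_energy_indicator fat_cantor_subset)
  also have "\<dots> \<le> 2 * (ennreal (1 / (s * (1 - s))) * (\<Sum>m. ennreal ((2 * a powr (1 - s)) ^ Suc m)))"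
    by (intro mult_left_mono interaction_fat_cantor_le) auto
  also have "\<dots> = ennreal (2 / (s * (1 - s))) * (\<Sum>m. ennreal ((2 * a powr (1 - s)) ^ Suc m))"
    using s_pos s_less
    by (simp add: mult.assoc[symmetric] ennreal_mult[symmetric] ennreal_numeral[symmetric]
        del: ennreal_numeral)
  finally show ?thesis .
qed

definition pair_floor :: "nat \<Rightarrow> real" where
  "pair_floor m = 1 / (2 * (2 * gap_scale m) powr (1 + s))"

lemma pair_floor_pos: "0 < pair_floor m"
  using gap_scale_bounds(1)[of m] by (simp add: pair_floor_def)

definition gap_pairs :: "nat \<Rightarrow> real \<times> real \<Rightarrow> real \<Rightarrow> real \<Rightarrow> ennreal" where
  "gap_pairs m p x y =
     ennreal (pair_floor m) * indicator (C \<inter> ivl (block m p)) x * indicator (strip m p) y"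

lemma gap_pairs_measurable[measurable]:
  "(\<lambda>(x, y). gap_pairs m p x y) \<in> borel_measurable (lborel \<Otimes>\<^sub>M lborel)"
  unfolding gap_pairs_def strip_def ivl_def by measurable

lemma gap_pairs_le:
  assumes p: "p \<in> stage m"
  shows "gap_pairs m p x y \<le> ennreal (\<bar>indicator C y - indicator C x\<bar> * besov_kernel s x y / 2)
    * indicator {0..1} y * indicator {0..1} x"
proof (cases "x \<in> C \<inter> ivl (block m p) \<and> y \<in> strip m p")
  case True
  then have y: "y \<in> gap m p" using strip_subset_gap by blast
  have "0 < x - y" "x - y \<le> 2 * gap_scale m"
    using True stage_len_gap_scale_exp_le[of m] by (auto simp: block_def strip_def ivl_def)
  then have "(2 * gap_scale m) powr -(1+s) \<le> besov_kernel s x y"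
    unfolding besov_kernel_def using s_pos by (intro powr_mono2') auto
  moreover have "pair_floor m = (2 * gap_scale m) powr -(1+s) / 2"
    unfolding pair_floor_def powr_minus_divide by simp
  ultimately have "pair_floor m \<le> besov_kernel s x y / 2"
    by simp
  moreover have "x \<in> {0..1}" "y \<in> {0..1}" "y \<notin> C"
    using True fat_cantor_subset gap_subset_unit[OF p] gap_disjoint_fat_cantor[OF p] y by auto
  ultimately show ?thesis using True by (simp add: gap_pairs_def ennreal_leI)
qed (auto simp: gap_pairs_def)

lemma sum_gap_pairs_le:
  "(\<Sum>(m, p)\<in>Sigma {..<N} stage. gap_pairs m p x y)
    \<le> ennreal (\<bar>indicator C y - indicator C x\<bar> * besov_kernel s x y / 2)
      * indicator {0..1} y * indicator {0..1} x" (is "_ \<le> ?B")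
proof (rule sum_le_if_single_nonzero)
  show "finite (Sigma {..<N} stage)" using finite_stage by blast
  show "(case mp of (m, p) \<Rightarrow> gap_pairs m p x y) \<le> ?B" if "mp \<in> Sigma {..<N} stage" for mp
    using that gap_pairs_le by auto
  show "mp = nq" if "mp \<in> Sigma {..<N} stage" "nq \<in> Sigma {..<N} stage"
    and "(case mp of (m, p) \<Rightarrow> gap_pairs m p x y) \<noteq> 0"
    and "(case nq of (m, p) \<Rightarrow> gap_pairs m p x y) \<noteq> 0" for mp nq
  proof (rule ccontr)
    assume ne: "mp \<noteq> nq"
    obtain m p n q where mp: "mp = (m, p)" and nq: "nq = (n, q)" by (cases mp, cases nq) blast
    have "y \<in> strip m p" "y \<in> strip n q"
      using that unfolding mp nq by (auto simp: gap_pairs_def split: split_indicator_asm)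
    then have "y \<in> gap m p" "y \<in> gap n q" using strip_subset_gap by blast+
    moreover have "gap m p \<inter> gap n q = {}"
      using that ne unfolding mp nq by (intro gaps_disjoint) auto
    ultimately show False by blast
  qed
qed

lemma nn_integral_gap_pairs:
  "(\<integral>\<^sup>+x. (\<integral>\<^sup>+y. gap_pairs m p x y \<partial>lborel) \<partial>lborel)
    = ennreal (pair_floor m * gap_scale m) * emeasure lborel (C \<inter> ivl (block m p))"
proof -
  have "(\<integral>\<^sup>+y. gap_pairs m p x y \<partial>lborel)
      = ennreal (pair_floor m) * indicator (C \<inter> ivl (block m p)) x * emeasure lborel (strip m p)" for x
    unfolding gap_pairs_def by (rule nn_integral_cmult_indicator) (simp add: strip_def)
  also have "\<dots> x = ennreal (pair_floor m * gap_scale m) * indicator (C \<inter> ivl (block m p)) x" for x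
    using pair_floor_pos[of m] gap_scale_bounds(1)[of m]
    by (simp add: emeasure_strip ennreal_mult mult_ac)
  finally show ?thesis by (simp add: nn_integral_cmult_indicator ivl_def)
qed

lemma pair_weight_ge: "mass / 8 * (a powr (1 - s)) ^ Suc m \<le> pair_floor m * gap_scale m * (mass * gap_scale m)"
proof -
  define d where "d = gap_scale m"
  have d: "0 < d" "a ^ Suc m \<le> 2 * d" using gap_scale_bounds[of m] by (auto simp: d_def)
  have "(a powr (1 - s)) ^ Suc m = (a ^ Suc m) powr (1 - s)" by (rule powr_power_commute[OF a_pos, symmetric])
  also have "\<dots> \<le> (2 * d) powr (1 - s)" using d a_pos s_less by (intro powr_mono2) auto
  also have "\<dots> = 2 * d / (2 * d) powr s" using d by (simp add: powr_diff)
  finally have "mass / 8 * (a powr (1 - s)) ^ Suc m \<le> mass / 8 * (2 * d / (2 * d) powr s)"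
    using mass_pos by (intro mult_left_mono) auto
  also have "\<dots> = pair_floor m * d * (mass * d)"
    using d by (simp add: pair_floor_def d_def powr_add field_simps)
  finally show ?thesis by (simp add: d_def)
qed

lemma nn_integral_gap_pairs_ge:
  assumes "p \<in> stage m"
  shows "ennreal (mass / 8 * (a powr (1 - s)) ^ Suc m)
    \<le> (\<integral>\<^sup>+x. (\<integral>\<^sup>+y. gap_pairs m p x y \<partial>lborel) \<partial>lborel)"
proof -
  have "mass * gap_scale m = mass / 2 ^ gap_scale_exp m"
    by (simp add: gap_scale_def power_one_over)
  then have block: "ennreal (mass * gap_scale m) \<le> emeasure lborel (C \<inter> ivl (block m p))"
    using emeasure_fat_cantor_stage_ge[OF block_stage[OF assms]] by simp
  have "0 \<le> pair_floor m * gap_scale m" using pair_floor_pos[of m] gap_scale_bounds(1)[of m] by simp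
  have "ennreal (mass / 8 * (a powr (1 - s)) ^ Suc m)
      \<le> ennreal (pair_floor m * gap_scale m * (mass * gap_scale m))"
    by (intro ennreal_leI pair_weight_ge)
  also have "\<dots> = ennreal (pair_floor m * gap_scale m) * ennreal (mass * gap_scale m)"
    using \<open>0 \<le> pair_floor m * gap_scale m\<close> by (rule ennreal_mult')
  also have "\<dots> \<le> ennreal (pair_floor m * gap_scale m) * emeasure lborel (C \<inter> ivl (block m p))"
    using block by (intro mult_left_mono) auto
  finally show ?thesis by (simp add: nn_integral_gap_pairs)
qed

lemma sum_stage_pair_weight:
  "(\<Sum>p\<in>stage m. ennreal (mass / 8 * (a powr (1 - s)) ^ Suc m))
    = ennreal (mass / 16 * (2 * a powr (1 - s)) ^ Suc m)"
proof -
  have "(\<Sum>p\<in>stage m. ennreal (mass / 8 * (a powr (1 - s)) ^ Suc m))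
      = ennreal (2 ^ m * (mass / 8 * (a powr (1 - s)) ^ Suc m))"
    using mass_pos by (intro sum_stage_const) simp
  also have "2 ^ m * (mass / 8 * (a powr (1 - s)) ^ Suc m) = mass / 16 * (2 * a powr (1 - s)) ^ Suc m"
    by (simp add: power_mult_distrib)
  finally show ?thesis .
qed

lemma nn_integral_sum_gap_pairs_le:
  "(\<integral>\<^sup>+x. (\<integral>\<^sup>+y. (\<Sum>(m, p)\<in>Sigma {..<N} stage. gap_pairs m p x y) \<partial>lborel) \<partial>lborel)
    \<le> besov_energy s (indicator C)"
proof -
  have "(\<integral>\<^sup>+x. (\<integral>\<^sup>+y. (\<Sum>(m, p)\<in>Sigma {..<N} stage. gap_pairs m p x y) \<partial>lborel) \<partial>lborel)
      \<le> (\<integral>\<^sup>+x. (\<integral>\<^sup>+y. ennreal (\<bar>indicator C y - indicator C x\<bar> * besov_kernel s x y / 2)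
          * indicator {0..1} y * indicator {0..1} x \<partial>lborel) \<partial>lborel)"
    by (intro nn_integral_mono sum_gap_pairs_le)
  also have "\<dots> = (\<integral>\<^sup>+x. (\<integral>\<^sup>+y. ennreal (\<bar>indicator C y - indicator C x\<bar> * besov_kernel s x y / 2)
      * indicator {0..1} y \<partial>lborel) * indicator {0..1} x \<partial>lborel)"
    by (intro nn_integral_cong nn_integral_multc) measurable
  also have "\<dots> \<le> besov_energy s (indicator C)"
    by (rule besov_energy_ge_kernel)
  finally show ?thesis .
qed

lemma besov_energy_fat_cantor_partial_ge:
  "(\<Sum>m<N. ennreal (mass / 16 * (2 * a powr (1 - s)) ^ Suc m)) \<le> besov_energy s (indicator C)"
proof -
  have "(\<Sum>m<N. ennreal (mass / 16 * (2 * a powr (1 - s)) ^ Suc m))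
      \<le> (\<Sum>m<N. \<Sum>p\<in>stage m. \<integral>\<^sup>+x. (\<integral>\<^sup>+y. gap_pairs m p x y \<partial>lborel) \<partial>lborel)"
    unfolding sum_stage_pair_weight[symmetric] by (intro sum_mono nn_integral_gap_pairs_ge)
  also have "\<dots> = (\<Sum>(m, p)\<in>Sigma {..<N} stage. \<integral>\<^sup>+x. (\<integral>\<^sup>+y. gap_pairs m p x y \<partial>lborel) \<partial>lborel)"
    using finite_stage by (subst sum.Sigma) auto
  also have "\<dots> = (\<integral>\<^sup>+x. (\<integral>\<^sup>+y. (\<Sum>(m, p)\<in>Sigma {..<N} stage. gap_pairs m p x y) \<partial>lborel) \<partial>lborel)"
    by (simp add: split_beta nn_integral_sum[symmetric])
  also have "\<dots> \<le> besov_energy s (indicator C)"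
    by (rule nn_integral_sum_gap_pairs_le)
  finally show ?thesis .
qed

lemma besov_energy_fat_cantor_ge:
  "ennreal (mass / 16) * (\<Sum>m. ennreal ((2 * a powr (1 - s)) ^ Suc m)) \<le> besov_energy s (indicator C)"
proof -
  have "ennreal (mass / 16) * (\<Sum>m. ennreal ((2 * a powr (1 - s)) ^ Suc m))
      = (\<Sum>m. ennreal (mass / 16 * (2 * a powr (1 - s)) ^ Suc m))"
    unfolding ennreal_suminf_cmult[symmetric] using mass_pos
    by (intro suminf_cong ennreal_mult[symmetric]) auto
  also have "\<dots> \<le> besov_energy s (indicator C)"
    by (intro suminf_le_const besov_energy_fat_cantor_partial_ge) auto
  finally show ?thesis .
qed

end

theorem proposition4p2:
  fixes s a :: real
  assumes "0 < s" "s < 1" "0 < a" "a < 1/3" "a < 1 / 2 powr (1 + s)"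
  shows "\<exists>C::real. C \<ge> 1 \<and>
    ennreal (1 / C) * (\<Sum>j. ennreal ((2 * a powr (1 - s)) ^ Suc j))
      \<le> besov_energy s (indicator (fat_cantor a)) \<and>
    besov_energy s (indicator (fat_cantor a))
      \<le> ennreal C * (\<Sum>j. ennreal ((2 * a powr (1 - s)) ^ Suc j))"
proof -
  interpret fat_cantor_besov a s
    using assms(1-4) by unfold_locales
  let ?S = "\<Sum>j. ennreal ((2 * a powr (1 - s)) ^ Suc j)"
  define K where "K = max (2 / (s * (1 - s))) (16 / mass)"
  have "0 < s * (1 - s)" "s * (1 - s) \<le> 1" using assms(1,2) by (auto intro: mult_le_one)
  then have "1 \<le> 2 / (s * (1 - s))" by (simp add: field_simps)
  then have K: "1 \<le> K" by (simp add: K_def)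
  have "16 / mass \<le> K" by (simp add: K_def)
  then have "1 / K \<le> mass / 16" using K mass_pos by (simp add: field_simps)
  then have "ennreal (1 / K) * ?S \<le> ennreal (mass / 16) * ?S"
    by (intro mult_right_mono ennreal_leI) auto
  also have "\<dots> \<le> besov_energy s (indicator C)" by (rule besov_energy_fat_cantor_ge)
  finally have lower: "ennreal (1 / K) * ?S \<le> besov_energy s (indicator C)" .
  have "besov_energy s (indicator C) \<le> ennreal (2 / (s * (1 - s))) * ?S"
    by (rule besov_energy_fat_cantor_le)
  also have "\<dots> \<le> ennreal K * ?S" by (intro mult_right_mono ennreal_leI) (auto simp: K_def)
  finally show ?thesis using K lower by blast
qed

end
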